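(* Let $(G,\theta)$ be a $p$-oriented profinite group and let $M$ be a Hilbert 90 module for $(G,\theta)$. Then $M$ is also a Hilbert 90 module for $(H,\theta|_H)$ for every closed subgroup $H$ of $G$.
   Context: A $p$-oriented profinite group is a pair $(G,\theta)$ with $G$ profinite and $\theta\colon G\to\mathbb Z_p^\times$ a continuous homomorphism. Let $S$ be the discrete $G$-module $\mathbb Q/\mathbb Z_{(p)}$ with $g$ acting by multiplication by $\theta(g)$. A Hilbert 90 module for $(G,\theta)$ is a discrete $G$-module $M$ such that (i) $pM=M$, (ii) the $p$-primary torsion subgroup $M\{p\}$ is isomorphic to $S$ as a $G$-module, and (iii) $H^1(H,M)=0$ for every open subgroup $H\subset G$. *)

theory Defs
  imports "HOL-Analysis.Analysis" "HOL-Algebra.Group"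
begin

section \<open>p-adic integers, represented as compatible residue sequences\<close>

definition zp :: "nat \<Rightarrow> (nat \<Rightarrow> int) set" where
  "zp p = {x. \<forall>n. 0 \<le> x n \<and> x n < int p ^ n \<and> x (Suc n) mod (int p ^ n) = x n}"

definition zp_one :: "nat \<Rightarrow> nat \<Rightarrow> int" where
  "zp_one p = (\<lambda>n. 1 mod (int p ^ n))"

definition zp_mult :: "nat \<Rightarrow> (nat \<Rightarrow> int) \<Rightarrow> (nat \<Rightarrow> int) \<Rightarrow> nat \<Rightarrow> int" where
  "zp_mult p x y = (\<lambda>n. (x n * y n) mod (int p ^ n))"

definition zp_units :: "nat \<Rightarrow> (nat \<Rightarrow> int) set" where
  "zp_units p = {x \<in> zp p. \<exists>y \<in> zp p. zp_mult p x y = zp_one p}"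

definition profinite_group :: "('g, 'b) monoid_scheme \<Rightarrow> 'g topology \<Rightarrow> bool" where
  "profinite_group G T \<longleftrightarrow> group G \<and> topspace T = carrier G \<and>
     compact_space T \<and> Hausdorff_space T \<and>
     (\<forall>x \<in> topspace T. connected_component_of_set T x = {x}) \<and>
     continuous_map (prod_topology T T) T (\<lambda>(x, y). x \<otimes>\<^bsub>G\<^esub> y) \<and>
     continuous_map T T (\<lambda>x. inv\<^bsub>G\<^esub> x)"

text \<open>Continuity into Z_p^x (p-adic topology): each residue map g |-> theta g n is locally constant.\<close>
definition p_oriented :: "nat \<Rightarrow> ('g, 'b) monoid_scheme \<Rightarrow> 'g topology \<Rightarrow> ('g \<Rightarrow> nat \<Rightarrow> int) \<Rightarrow> bool" where
  "p_oriented p G T \<theta> \<longleftrightarrow> prime p \<and> profinite_group G T \<and>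
     (\<forall>g \<in> carrier G. \<theta> g \<in> zp_units p) \<and>
     (\<forall>g \<in> carrier G. \<forall>h \<in> carrier G. \<theta> (g \<otimes>\<^bsub>G\<^esub> h) = zp_mult p (\<theta> g) (\<theta> h)) \<and>
     (\<forall>n a. openin T {g \<in> carrier G. \<theta> g n = a})"

definition discrete_module ::
  "('g, 'b) monoid_scheme \<Rightarrow> 'g topology \<Rightarrow> ('m, 'c) monoid_scheme \<Rightarrow> ('g \<Rightarrow> 'm \<Rightarrow> 'm) \<Rightarrow> bool" where
  "discrete_module G T M act \<longleftrightarrow> comm_group M \<and>
     (\<forall>g \<in> carrier G. act g \<in> hom M M) \<and>
     (\<forall>x \<in> carrier M. act \<one>\<^bsub>G\<^esub> x = x) \<and>
     (\<forall>g \<in> carrier G. \<forall>h \<in> carrier G. \<forall>x \<in> carrier M. act (g \<otimes>\<^bsub>G\<^esub> h) x = act g (act h x)) \<and>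
     (\<forall>x \<in> carrier M. openin T {g \<in> carrier G. act g x = x})"

section \<open>The module S = Q/Z_(p) (= Q_p/Z_p), with twisted action\<close>

definition S_carrier :: "nat \<Rightarrow> rat set" where
  "S_carrier p = {r. 0 \<le> r \<and> r < 1 \<and> (\<exists>k. r * of_nat p ^ k \<in> \<int>)}"

definition S_add :: "rat \<Rightarrow> rat \<Rightarrow> rat" where
  "S_add r s = frac (r + s)"

text \<open>Action of u in Z_p on r = a/p^k: u r = (u mod p^k) * r mod 1.\<close>
definition S_act :: "nat \<Rightarrow> (nat \<Rightarrow> int) \<Rightarrow> rat \<Rightarrow> rat" where
  "S_act p u r = frac (of_int (u (LEAST k. r * of_nat p ^ k \<in> \<int>)) * r)"

definition p_primary :: "nat \<Rightarrow> ('m, 'c) monoid_scheme \<Rightarrow> 'm set" where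
  "p_primary p M = {x \<in> carrier M. \<exists>k. x [^]\<^bsub>M\<^esub> (p ^ k) = \<one>\<^bsub>M\<^esub>}"

definition H1_vanishes ::
  "('g, 'b) monoid_scheme \<Rightarrow> 'g topology \<Rightarrow> ('m, 'c) monoid_scheme \<Rightarrow> ('g \<Rightarrow> 'm \<Rightarrow> 'm) \<Rightarrow> 'g set \<Rightarrow> bool" where
  "H1_vanishes G T M act K \<longleftrightarrow>
     (\<forall>f. (\<forall>g \<in> K. f g \<in> carrier M) \<and>
          (\<forall>g \<in> K. \<forall>h \<in> K. f (g \<otimes>\<^bsub>G\<^esub> h) = f g \<otimes>\<^bsub>M\<^esub> act g (f h)) \<and>
          (\<forall>x. openin (subtopology T K) {g \<in> K. f g = x})
        \<longrightarrow> (\<exists>m \<in> carrier M. \<forall>g \<in> K. f g = act g m \<otimes>\<^bsub>M\<^esub> inv\<^bsub>M\<^esub> m))"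

definition hilbert90_module ::
  "nat \<Rightarrow> ('g, 'b) monoid_scheme \<Rightarrow> 'g topology \<Rightarrow> ('g \<Rightarrow> nat \<Rightarrow> int) \<Rightarrow>
   ('m, 'c) monoid_scheme \<Rightarrow> ('g \<Rightarrow> 'm \<Rightarrow> 'm) \<Rightarrow> bool" where
  "hilbert90_module p G T \<theta> M act \<longleftrightarrow>
     discrete_module G T M act \<and>
     (\<forall>x \<in> carrier M. \<exists>y \<in> carrier M. y [^]\<^bsub>M\<^esub> p = x) \<and>
     (\<exists>\<phi>. bij_betw \<phi> (p_primary p M) (S_carrier p) \<and>
          (\<forall>x \<in> p_primary p M. \<forall>y \<in> p_primary p M. \<phi> (x \<otimes>\<^bsub>M\<^esub> y) = S_add (\<phi> x) (\<phi> y)) \<and>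
          (\<forall>g \<in> carrier G. \<forall>x \<in> p_primary p M. \<phi> (act g x) = S_act p (\<theta> g) (\<phi> x))) \<and>
     (\<forall>H. subgroup H G \<and> openin T H \<longrightarrow> H1_vanishes G T M act H)"

end

theory Submission
  imports Defs "HOL-Algebra.Zassenhaus"
begin

text \<open>Restricting the action, the identification with \<open>S\<close> and \<open>p\<close>-divisibility from \<open>G\<close> to
  \<open>H\<close> is immediate; the point is the vanishing of \<open>H\<^sup>1\<close>. We show \<open>H\<^sup>1(U, M) = 0\<close> for every
  subgroup \<open>U\<close> of \<open>G\<close>. A continuous crossed homomorphism \<open>f\<close> on \<open>U\<close> is locally constant, so it
  is trivial on \<open>U \<inter> W\<close> for an open neighbourhood \<open>W\<close> of \<open>\<one>\<close>, and it takes only finitely many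
  values because open subgroups of a compact group have finite index. Open normal subgroups form a
  neighbourhood basis of \<open>\<one>\<close> in a profinite group, so some open normal \<open>N \<subseteq> W\<close> fixes all these
  values. Then \<open>u n \<mapsto> f u\<close> is a continuous crossed homomorphism on the open subgroup \<open>U N\<close>
  extending \<open>f\<close>; it is a coboundary by hypothesis, hence so is \<open>f\<close>.\<close>

lemma (in group) inv_mult_cancel_left [simp]:
  "x \<in> carrier G \<Longrightarrow> y \<in> carrier G \<Longrightarrow> inv x \<otimes> (x \<otimes> y) = y"
  by (simp add: m_assoc[symmetric])

lemma (in group) mult_inv_cancel_left [simp]:
  "x \<in> carrier G \<Longrightarrow> y \<in> carrier G \<Longrightarrow> x \<otimes> (inv x \<otimes> y) = y"
  by (simp add: m_assoc[symmetric])

lemma (in group) subgroup_right_stabilizer: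
  assumes "C \<subseteq> carrier G"
  shows "subgroup {x \<in> carrier G. \<forall>c \<in> C. c \<otimes> x \<in> C \<and> c \<otimes> inv x \<in> C} G"
    (is "subgroup ?K G")
proof (rule subgroupI)
  show "?K \<subseteq> carrier G" "?K \<noteq> {}"
    using assms by (auto intro!: exI[of _ \<one>])
next
  fix a assume "a \<in> ?K"
  then show "inv a \<in> ?K"
    by auto
next
  fix a b assume a: "a \<in> ?K" and b: "b \<in> ?K"
  have "c \<otimes> (a \<otimes> b) \<in> C \<and> c \<otimes> inv (a \<otimes> b) \<in> C" if c: "c \<in> C" for c
  proof -
    have "(c \<otimes> a) \<otimes> b \<in> C" "(c \<otimes> inv b) \<otimes> inv a \<in> C"
      using a b c by auto
    moreover have "c \<in> carrier G"
      using c assms by blast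
    ultimately show ?thesis
      using a b by (simp add: m_assoc inv_mult_group)
  qed
  then show "a \<otimes> b \<in> ?K"
    using a b by simp
qed

locale profinite_grp =
  fixes G :: "('g, 'b) monoid_scheme" (structure) and T :: "'g topology"
  assumes profinite: "profinite_group G T"
begin

sublocale group G
  using profinite by (simp add: profinite_group_def)

lemma topspace_eq [simp]: "topspace T = carrier G"
  using profinite by (simp add: profinite_group_def)

lemma compact_space: "compact_space T"
  using profinite by (simp add: profinite_group_def)

lemma continuous_map_mult: "continuous_map (prod_topology T T) T (\<lambda>(x, y). x \<otimes> y)"
  using profinite by (simp add: profinite_group_def)

lemma continuous_map_inv: "continuous_map T T (\<lambda>x. inv x)"
  using profinite by (simp add: profinite_group_def)

lemma continuous_map_left_mult:
  assumes "a \<in> carrier G"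
  shows "continuous_map T T (\<lambda>x. a \<otimes> x)"
proof -
  have "continuous_map T (prod_topology T T) (\<lambda>x. (a, x))"
    using assms by (auto intro!: continuous_map_pairedI)
  from continuous_map_compose[OF this continuous_map_mult] show ?thesis
    by (simp add: o_def)
qed

lemma continuous_map_right_mult:
  assumes "b \<in> carrier G"
  shows "continuous_map T T (\<lambda>x. x \<otimes> b)"
proof -
  have "continuous_map T (prod_topology T T) (\<lambda>x. (x, b))"
    using assms by (auto intro!: continuous_map_pairedI)
  from continuous_map_compose[OF this continuous_map_mult] show ?thesis
    by (simp add: o_def)
qed

lemma openin_left_mult_preimage:
  assumes "a \<in> carrier G" "openin T W"
  shows "openin T {x \<in> carrier G. a \<otimes> x \<in> W}"
  using openin_continuous_map_preimage[OF continuous_map_left_mult[OF assms(1)] assms(2)] by simp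

lemma openin_mult_preimage:
  assumes "a \<in> carrier G" "b \<in> carrier G" "openin T W"
  shows "openin T {x \<in> carrier G. a \<otimes> x \<otimes> b \<in> W}"
  using openin_continuous_map_preimage[OF continuous_map_compose[OF
        continuous_map_left_mult[OF assms(1)] continuous_map_right_mult[OF assms(2)]] assms(3)]
  by (simp add: o_def)

lemma openin_inv_preimage:
  assumes "openin T W"
  shows "openin T {x \<in> carrier G. inv x \<in> W}"
  using openin_continuous_map_preimage[OF continuous_map_inv assms] by simp

lemma openin_subgroupI:
  assumes S: "subgroup S G" and W: "openin T W" "\<one> \<in> W" "W \<subseteq> S"
  shows "openin T S"
proof (rule openin_subopen[THEN iffD2], intro ballI)
  fix s assume s: "s \<in> S"
  have sG: "s \<in> carrier G"
    using subgroup.mem_carrier[OF S s] .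
  let ?Z = "{x \<in> carrier G. inv s \<otimes> x \<in> W}"
  have "?Z \<subseteq> S"
  proof
    fix x assume x: "x \<in> ?Z"
    then have "inv s \<otimes> x \<in> S"
      using W(3) by blast
    then have "s \<otimes> (inv s \<otimes> x) \<in> S"
      by (rule subgroup.m_closed[OF S s])
    then show "x \<in> S"
      using x sG by simp
  qed
  moreover have "s \<in> ?Z"
    using sG W(2) by simp
  moreover have "openin T ?Z"
    using openin_left_mult_preimage[OF inv_closed[OF sG] W(1)] .
  ultimately show "\<exists>Z. openin T Z \<and> s \<in> Z \<and> Z \<subseteq> S"
    by blast
qed

text \<open>This is where total disconnectedness enters, via the cut-wire-fence theorem.\<close>

lemma clopen_nhd_one:
  assumes W: "openin T W" "\<one> \<in> W"
  shows "\<exists>C. closedin T C \<and> openin T C \<and> \<one> \<in> C \<and> C \<subseteq> W"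
proof -
  have "Hausdorff_space T"
    and components: "\<forall>x \<in> carrier G. connected_component_of_set T x = {x}"
    using profinite by (auto simp: profinite_group_def)
  have "separated_between T {\<one>} (topspace T - W)"
  proof (rule cut_wire_fence_theorem[OF compact_space \<open>Hausdorff_space T\<close>])
    show "closedin T {\<one>}"
      by (simp add: \<open>Hausdorff_space T\<close> Hausdorff_imp_t1_space closedin_t1_singleton)
    show "closedin T (topspace T - W)"
      using W by blast
    fix C assume C: "connectedin T C"
    show "disjnt C {\<one>} \<or> disjnt C (topspace T - W)"
    proof (cases "\<one> \<in> C")
      case True
      then have "C \<subseteq> {\<one>}"
        using connected_component_of_maximal[OF C True] components by auto
      then show ?thesis
        using W(2) by (auto simp: disjnt_def)
    qed (auto simp: disjnt_def)
  qed
  then obtain U V where UV: "openin T U" "openin T V" "U \<union> V = topspace T" "disjnt U V"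
    "\<one> \<in> U" "topspace T - W \<subseteq> V"
    unfolding separated_between_def by blast
  then have "U = topspace T - V"
    by (auto simp: disjnt_def)
  then have "closedin T U"
    using closedin_diff[OF closedin_topspace UV(2)] by simp
  moreover have "U \<subseteq> W"
    using UV openin_subset[OF UV(1)] by (auto simp: disjnt_def)
  ultimately show ?thesis
    using UV by blast
qed

lemma open_subgroup_nhd_one:
  assumes W: "openin T W" "\<one> \<in> W"
  shows "\<exists>K. subgroup K G \<and> openin T K \<and> K \<subseteq> W"
proof -
  obtain C where C: "closedin T C" "openin T C" "\<one> \<in> C" "C \<subseteq> W"
    using clopen_nhd_one[OF W] by blast
  have CG: "C \<subseteq> carrier G"
    using closedin_subset[OF C(1)] by simp
  define P where "P = {z \<in> topspace (prod_topology T T). (\<lambda>(x, y). x \<otimes> y) z \<in> C}"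
  have P: "openin (prod_topology T T) P"
    unfolding P_def by (rule openin_continuous_map_preimage[OF continuous_map_mult C(2)])
  have CP: "C \<times> {\<one>} \<subseteq> P"
    using CG by (auto simp: P_def)
  have "\<exists>U V. openin T U \<and> openin T V \<and> C \<subseteq> U \<and> \<one> \<in> V \<and> U \<times> V \<subseteq> P"
    by (rule tube_lemma_left[OF P closedin_compact_space[OF compact_space C(1)] _ CP]) simp
  then obtain U V where V: "openin T V" "\<one> \<in> V" "C \<subseteq> U" "U \<times> V \<subseteq> P"
    by blast
  define K where "K = {x \<in> carrier G. \<forall>c\<in>C. c \<otimes> x \<in> C \<and> c \<otimes> inv x \<in> C}"
  have CV: "c \<otimes> v \<in> C" if "c \<in> C" "v \<in> V" for c v
  proof -
    have "(c, v) \<in> U \<times> V"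
      using V(3) that by blast
    then show ?thesis
      using V(4) by (auto simp: P_def)
  qed
  have K: "subgroup K G"
    unfolding K_def using subgroup_right_stabilizer[OF CG] .
  have "V \<inter> {x \<in> carrier G. inv x \<in> V} \<subseteq> K"
    using CV openin_subset[OF V(1)] by (auto simp: K_def)
  then have "openin T K"
    using openin_subgroupI[OF K openin_Int[OF V(1) openin_inv_preimage[OF V(1)]]] V(2) by simp
  moreover have "K \<subseteq> W"
    using C(3,4) by (auto simp: K_def)
  ultimately show ?thesis
    using K by blast
qed

lemma open_subgroup_finite_transversal:
  assumes K: "subgroup K G" "openin T K"
  shows "\<exists>F. finite F \<and> F \<subseteq> carrier G \<and> (\<forall>x\<in>carrier G. \<exists>g\<in>F. inv g \<otimes> x \<in> K)"
proof -
  define Z where "Z g = {x \<in> carrier G. inv g \<otimes> x \<in> K}" for g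
  have "\<forall>U \<in> Z ` carrier G. openin T U"
    unfolding Z_def using openin_left_mult_preimage[OF inv_closed K(2)] by auto
  moreover have "topspace T \<subseteq> \<Union> (Z ` carrier G)"
    using subgroup.one_closed[OF K(1)] by (force simp: Z_def)
  ultimately obtain \<F> where "finite \<F>" "\<F> \<subseteq> Z ` carrier G" "topspace T \<subseteq> \<Union>\<F>"
    using compact_space unfolding compact_space_alt by meson
  moreover from this obtain F where "F \<subseteq> carrier G" "finite F" "\<F> = Z ` F"
    by (meson finite_subset_image)
  ultimately show ?thesis
    by (intro exI[of _ F]) (auto simp: Z_def)
qed

end

definition core :: "('g, 'b) monoid_scheme \<Rightarrow> 'g set \<Rightarrow> 'g set" where
  "core G K = {x \<in> carrier G. \<forall>g \<in> carrier G. inv\<^bsub>G\<^esub> g \<otimes>\<^bsub>G\<^esub> x \<otimes>\<^bsub>G\<^esub> g \<in> K}"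

lemma (in group) core_subset: "subgroup K G \<Longrightarrow> core G K \<subseteq> K"
  by (auto simp: core_def dest: bspec[of _ _ \<one>])

lemma (in group) core_normal:
  assumes K: "subgroup K G"
  shows "core G K \<lhd> G"
  unfolding normal_inv_iff
proof (intro conjI ballI)
  have conj_mult: "inv g \<otimes> (a \<otimes> b) \<otimes> g = (inv g \<otimes> a \<otimes> g) \<otimes> (inv g \<otimes> b \<otimes> g)"
    if "a \<in> carrier G" "b \<in> carrier G" "g \<in> carrier G" for a b g
    using that by (simp add: m_assoc[symmetric]) (simp add: m_assoc)
  have conj_inv: "inv g \<otimes> inv a \<otimes> g = inv (inv g \<otimes> a \<otimes> g)"
    if "a \<in> carrier G" "g \<in> carrier G" for a g
    using that by (simp add: inv_mult_group m_assoc)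
  show "subgroup (core G K) G"
  proof (rule subgroupI)
    show "core G K \<subseteq> carrier G" "core G K \<noteq> {}"
      using subgroup.one_closed[OF K] by (auto simp: core_def intro!: exI[of _ \<one>])
  next
    fix a assume "a \<in> core G K"
    then show "inv a \<in> core G K"
      by (auto simp: core_def conj_inv intro: subgroup.m_inv_closed[OF K])
  next
    fix a b assume "a \<in> core G K" "b \<in> core G K"
    then show "a \<otimes> b \<in> core G K"
      by (auto simp: core_def conj_mult intro: subgroup.m_closed[OF K])
  qed
next
  fix x h assume x: "x \<in> carrier G" and h: "h \<in> core G K"
  then have "inv (inv x \<otimes> g) \<otimes> h \<otimes> (inv x \<otimes> g) \<in> K" if "g \<in> carrier G" for g
    using that by (simp add: core_def)
  moreover have "inv (inv x \<otimes> g) \<otimes> h \<otimes> (inv x \<otimes> g) = inv g \<otimes> (x \<otimes> h \<otimes> inv x) \<otimes> g"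
    if "g \<in> carrier G" for g
    using x h that by (simp add: core_def inv_mult_group m_assoc)
  ultimately show "x \<otimes> h \<otimes> inv x \<in> core G K"
    using x h by (simp add: core_def)
qed

lemma mem_set_mult_iff: "g \<in> A <#>\<^bsub>G\<^esub> B \<longleftrightarrow> (\<exists>a \<in> A. \<exists>b \<in> B. g = a \<otimes>\<^bsub>G\<^esub> b)"
  by (auto simp: set_mult_def)

context profinite_grp
begin

text \<open>With \<open>F\<close> a finite transversal of the open subgroup \<open>K\<close>, the core is the finite
  intersection of the conjugates \<open>g K g\<inverse>\<close> for \<open>g \<in> F\<close>.\<close>

lemma openin_core:
  assumes K: "subgroup K G" "openin T K"
  shows "openin T (core G K)"
proof -
  obtain F where F: "finite F" "F \<subseteq> carrier G" "\<forall>x\<in>carrier G. \<exists>g\<in>F. inv g \<otimes> x \<in> K"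
    using open_subgroup_finite_transversal[OF K] by blast
  have "core G K = carrier G \<inter> (\<Inter>g\<in>F. {x \<in> carrier G. inv g \<otimes> x \<otimes> g \<in> K})"
  proof (intro equalityI subsetI)
    fix x assume x: "x \<in> carrier G \<inter> (\<Inter>g\<in>F. {x \<in> carrier G. inv g \<otimes> x \<otimes> g \<in> K})"
    have "inv g \<otimes> x \<otimes> g \<in> K" if g: "g \<in> carrier G" for g
    proof -
      obtain g0 where g0: "g0 \<in> F" "inv g0 \<otimes> g \<in> K"
        using F(3) g by blast
      define k where "k = inv g0 \<otimes> g"
      have g0G: "g0 \<in> carrier G" and kG: "k \<in> carrier G"
        using g0 F(2) g by (auto simp: k_def)
      have "inv g0 \<otimes> x \<otimes> g0 \<in> K" "k \<in> K"
        using x g0 by (auto simp: k_def)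
      then have "inv k \<otimes> (inv g0 \<otimes> x \<otimes> g0) \<otimes> k \<in> K"
        by (meson K(1) subgroup.m_closed subgroup.m_inv_closed)
      moreover have "g = g0 \<otimes> k"
        using g g0G by (simp add: k_def m_assoc[symmetric])
      ultimately show ?thesis
        using g0G kG x by (simp add: inv_mult_group m_assoc)
    qed
    then show "x \<in> core G K"
      using x by (simp add: core_def)
  qed (use F(2) in \<open>auto simp: core_def\<close>)
  moreover have "openin T (carrier G \<inter> (\<Inter>g\<in>F. {x \<in> carrier G. inv g \<otimes> x \<otimes> g \<in> K}))"
    using F(1,2) K(2) openin_topspace[of T]
    by (intro openin_Int_Inter) (auto intro: openin_mult_preimage)
  ultimately show ?thesis
    by simp
qed

lemma open_normal_subgroup_nhd_one:
  assumes "openin T W" "\<one> \<in> W"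
  shows "\<exists>N. N \<lhd> G \<and> openin T N \<and> N \<subseteq> W"
proof -
  obtain K where "subgroup K G" "openin T K" "K \<subseteq> W"
    using open_subgroup_nhd_one[OF assms] by blast
  then show ?thesis
    using core_normal core_subset openin_core by blast
qed

lemma open_subgroup_set_mult_normal:
  assumes U: "subgroup U G" and N: "N \<lhd> G" "openin T N"
  shows "subgroup (U <#> N) G" "openin T (U <#> N)"
proof -
  show UN: "subgroup (U <#> N) G"
    using mult_norm_subgroup[OF N(1) U] commut_normal[OF U N(1)] by simp
  have "N \<subseteq> U <#> N"
    using subgroup.one_closed[OF U] subgroup.subset[OF normal_imp_subgroup[OF N(1)]]
    by (force simp: mem_set_mult_iff)
  then show "openin T (U <#> N)"
    using openin_subgroupI[OF UN N(2)] subgroup.one_closed[OF normal_imp_subgroup[OF N(1)]] by blast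
qed

end

definition continuous_crossed_hom ::
  "('g, 'b) monoid_scheme \<Rightarrow> 'g topology \<Rightarrow> ('m, 'c) monoid_scheme \<Rightarrow> ('g \<Rightarrow> 'm \<Rightarrow> 'm) \<Rightarrow>
   'g set \<Rightarrow> ('g \<Rightarrow> 'm) \<Rightarrow> bool" where
  "continuous_crossed_hom G T M act K f \<longleftrightarrow>
     (\<forall>g \<in> K. f g \<in> carrier M) \<and>
     (\<forall>g \<in> K. \<forall>h \<in> K. f (g \<otimes>\<^bsub>G\<^esub> h) = f g \<otimes>\<^bsub>M\<^esub> act g (f h)) \<and>
     (\<forall>x. openin (subtopology T K) {g \<in> K. f g = x})"

lemma H1_vanishes_iff:
  "H1_vanishes G T M act K \<longleftrightarrow>
     (\<forall>f. continuous_crossed_hom G T M act K f \<longrightarrow>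
          (\<exists>m \<in> carrier M. \<forall>g \<in> K. f g = act g m \<otimes>\<^bsub>M\<^esub> inv\<^bsub>M\<^esub> m))"
  by (simp add: H1_vanishes_def continuous_crossed_hom_def)

locale profinite_module = profinite_grp G T
  for G :: "('g, 'b) monoid_scheme" (structure) and T :: "'g topology" +
  fixes M :: "('m, 'c) monoid_scheme" and act :: "'g \<Rightarrow> 'm \<Rightarrow> 'm"
  assumes discrete_module: "discrete_module G T M act"
begin

sublocale M: comm_group M
  using discrete_module by (simp add: discrete_module_def)

lemma act_M_one: "g \<in> carrier G \<Longrightarrow> act g \<one>\<^bsub>M\<^esub> = \<one>\<^bsub>M\<^esub>"
  using discrete_module M.is_group by (auto simp: discrete_module_def intro: hom_one)

lemma act_one: "x \<in> carrier M \<Longrightarrow> act \<one> x = x"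
  using discrete_module by (simp add: discrete_module_def)

lemma act_mult:
  "g \<in> carrier G \<Longrightarrow> h \<in> carrier G \<Longrightarrow> x \<in> carrier M \<Longrightarrow> act (g \<otimes> h) x = act g (act h x)"
  using discrete_module by (simp add: discrete_module_def)

lemma openin_stabilizer: "x \<in> carrier M \<Longrightarrow> openin T {g \<in> carrier G. act g x = x}"
  using discrete_module by (simp add: discrete_module_def)

context
  fixes U f
  assumes U: "subgroup U G" and f: "continuous_crossed_hom G T M act U f"
begin

lemma crossed_hom_closed: "u \<in> U \<Longrightarrow> f u \<in> carrier M"
  using f by (simp add: continuous_crossed_hom_def)

lemma crossed_hom_mult: "u \<in> U \<Longrightarrow> v \<in> U \<Longrightarrow> f (u \<otimes> v) = f u \<otimes>\<^bsub>M\<^esub> act u (f v)"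
  using f by (simp add: continuous_crossed_hom_def)

lemma crossed_hom_one: "f \<one> = \<one>\<^bsub>M\<^esub>"
proof -
  have "f \<one> = f \<one> \<otimes>\<^bsub>M\<^esub> f \<one>"
    using crossed_hom_mult[of \<one> \<one>] subgroup.one_closed[OF U]
    by (simp add: act_one crossed_hom_closed)
  then show ?thesis
    using crossed_hom_closed[OF subgroup.one_closed[OF U]] by simp
qed

lemma crossed_hom_eqI:
  assumes "u \<in> U" "v \<in> U" "f (inv u \<otimes> v) = \<one>\<^bsub>M\<^esub>"
  shows "f v = f u"
proof -
  have uG: "u \<in> carrier G" and vG: "v \<in> carrier G"
    using assms(1,2) subgroup.mem_carrier[OF U] by auto
  have "f v = f (u \<otimes> (inv u \<otimes> v))"
    using uG vG by (simp add: m_assoc[symmetric])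
  also have "\<dots> = f u"
    using assms uG by (simp add: crossed_hom_mult subgroup.m_closed[OF U]
        subgroup.m_inv_closed[OF U] act_M_one crossed_hom_closed)
  finally show ?thesis .
qed

lemma crossed_hom_kernel_nhd_one:
  obtains V where "openin T V" "\<one> \<in> V" "\<forall>g \<in> U \<inter> V. f g = \<one>\<^bsub>M\<^esub>"
proof -
  have "openin (subtopology T U) {g \<in> U. f g = \<one>\<^bsub>M\<^esub>}"
    using f by (simp add: continuous_crossed_hom_def)
  then obtain V where "openin T V" "{g \<in> U. f g = \<one>\<^bsub>M\<^esub>} = V \<inter> U"
    unfolding openin_subtopology by blast
  moreover have "\<one> \<in> {g \<in> U. f g = \<one>\<^bsub>M\<^esub>}"
    using crossed_hom_one subgroup.one_closed[OF U] by simp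
  ultimately show ?thesis
    using that by blast
qed

text \<open>\<open>f\<close> is constant on each set \<open>U \<inter> g K\<close>, where \<open>K\<close> is an open subgroup on which \<open>f\<close> is
  trivial, and finitely many cosets \<open>g K\<close> cover \<open>G\<close>.\<close>

lemma crossed_hom_finite_image: "finite (f ` U)"
proof -
  obtain V where V: "openin T V" "\<one> \<in> V" "\<forall>g \<in> U \<inter> V. f g = \<one>\<^bsub>M\<^esub>"
    using crossed_hom_kernel_nhd_one by blast
  obtain K where K: "subgroup K G" "openin T K" "K \<subseteq> V"
    using open_subgroup_nhd_one[OF V(1,2)] by blast
  obtain F where F: "finite F" "F \<subseteq> carrier G" "\<forall>x\<in>carrier G. \<exists>g\<in>F. inv g \<otimes> x \<in> K"
    using open_subgroup_finite_transversal[OF K(1,2)] by blast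
  define S where "S g = {u \<in> U. inv g \<otimes> u \<in> K}" for g
  have finite_S: "finite (f ` S g)" if g: "g \<in> carrier G" for g
  proof (cases "S g = {}")
    case False
    then obtain u where u: "u \<in> S g"
      by blast
    have "f v = f u" if v: "v \<in> S g" for v
    proof (rule crossed_hom_eqI)
      have uG: "u \<in> carrier G" and vG: "v \<in> carrier G"
        using u v subgroup.mem_carrier[OF U] by (auto simp: S_def)
      have "inv (inv g \<otimes> u) \<otimes> (inv g \<otimes> v) \<in> K"
        using u v K(1) by (auto simp: S_def intro: subgroup.m_closed subgroup.m_inv_closed)
      then have "inv u \<otimes> v \<in> K"
        using uG vG g by (simp add: inv_mult_group m_assoc)
      moreover have "inv u \<otimes> v \<in> U"
        using u v U by (auto simp: S_def intro: subgroup.m_closed subgroup.m_inv_closed)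
      ultimately show "f (inv u \<otimes> v) = \<one>\<^bsub>M\<^esub>"
        using V(3) K(3) by blast
    qed (use u v in \<open>auto simp: S_def\<close>)
    then have "f ` S g \<subseteq> {f u}"
      by blast
    then show ?thesis
      using finite_subset by blast
  qed simp
  have "f ` U \<subseteq> (\<Union>g\<in>F. f ` S g)"
    using F(3) subgroup.mem_carrier[OF U] by (fastforce simp: S_def)
  moreover have "finite (\<Union>g\<in>F. f ` S g)"
    using F(1,2) finite_S by blast
  ultimately show ?thesis
    by (rule finite_subset)
qed

context
  fixes N
  assumes N: "N \<lhd> G" "openin T N"
    and kernel: "\<forall>n \<in> N \<inter> U. f n = \<one>\<^bsub>M\<^esub>"
    and stable: "\<forall>n \<in> N. \<forall>u \<in> U. act n (f u) = f u"
begin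

definition extended_crossed_hom :: "'g \<Rightarrow> 'm" where
  "extended_crossed_hom g = f (SOME u. u \<in> U \<and> (\<exists>n \<in> N. g = u \<otimes> n))"

lemma extended_crossed_hom_eq:
  assumes u: "u \<in> U" and n: "n \<in> N"
  shows "extended_crossed_hom (u \<otimes> n) = f u"
proof -
  have NS: "subgroup N G"
    using normal_imp_subgroup[OF N(1)] .
  define u' where "u' = (SOME u'. u' \<in> U \<and> (\<exists>n' \<in> N. u \<otimes> n = u' \<otimes> n'))"
  have "u' \<in> U \<and> (\<exists>n' \<in> N. u \<otimes> n = u' \<otimes> n')"
    unfolding u'_def by (rule someI_ex) (use u n in blast)
  then obtain n' where u': "u' \<in> U" "n' \<in> N" "u \<otimes> n = u' \<otimes> n'"
    by blast
  have G: "u \<in> carrier G" "u' \<in> carrier G" "n \<in> carrier G"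
    using u u'(1) n subgroup.mem_carrier[OF U] subgroup.mem_carrier[OF NS] by auto
  have "inv u' \<otimes> u = inv u' \<otimes> (u \<otimes> n) \<otimes> inv n"
    using G by (simp add: m_assoc)
  also have "\<dots> = n' \<otimes> inv n"
    using G u'(2,3) subgroup.mem_carrier[OF NS] by simp
  finally have "inv u' \<otimes> u \<in> N"
    using n u'(2) by (simp add: subgroup.m_closed subgroup.m_inv_closed NS)
  moreover have "inv u' \<otimes> u \<in> U"
    using u u'(1) by (simp add: subgroup.m_closed subgroup.m_inv_closed U)
  ultimately have "f u = f u'"
    using crossed_hom_eqI[OF u'(1) u] kernel by blast
  then show ?thesis
    by (simp add: extended_crossed_hom_def u'_def)
qed

lemma extended_crossed_hom_restrict: "u \<in> U \<Longrightarrow> extended_crossed_hom u = f u"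
  using extended_crossed_hom_eq[of u \<one>] subgroup.one_closed[OF normal_imp_subgroup[OF N(1)]]
    subgroup.mem_carrier[OF U] by simp

lemma extended_crossed_hom_mult:
  assumes "g \<in> U <#> N" "h \<in> U <#> N"
  shows "extended_crossed_hom (g \<otimes> h) =
    extended_crossed_hom g \<otimes>\<^bsub>M\<^esub> act g (extended_crossed_hom h)"
proof -
  have NS: "subgroup N G"
    using normal_imp_subgroup[OF N(1)] .
  obtain u n u' n' where u: "u \<in> U" "n \<in> N" "g = u \<otimes> n" and u': "u' \<in> U" "n' \<in> N" "h = u' \<otimes> n'"
    using assms unfolding mem_set_mult_iff by blast
  have G: "u \<in> carrier G" "u' \<in> carrier G" "n \<in> carrier G" "n' \<in> carrier G"
    using u u' subgroup.mem_carrier[OF U] subgroup.mem_carrier[OF NS] by auto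
  have "inv u' \<otimes> n \<otimes> inv (inv u') \<in> N"
    using N(1)[unfolded normal_inv_iff] u(2) G(2) by blast
  then have "(inv u' \<otimes> n \<otimes> u') \<otimes> n' \<in> N"
    using u'(2) G(2) by (simp add: subgroup.m_closed[OF NS])
  moreover have "g \<otimes> h = (u \<otimes> u') \<otimes> ((inv u' \<otimes> n \<otimes> u') \<otimes> n')"
    using u(3) u'(3) G by (simp add: m_assoc)
  ultimately have "extended_crossed_hom (g \<otimes> h) = f u \<otimes>\<^bsub>M\<^esub> act u (f u')"
    using extended_crossed_hom_eq u u' by (simp add: subgroup.m_closed[OF U] crossed_hom_mult)
  moreover have "act g (extended_crossed_hom h) = act u (f u')"
    using u u' G stable by (simp add: extended_crossed_hom_eq act_mult crossed_hom_closed)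
  ultimately show ?thesis
    using extended_crossed_hom_eq u by simp
qed

text \<open>Each fibre is a union of cosets \<open>g N\<close>.\<close>

lemma openin_extended_crossed_hom_fibre:
  "openin T {g \<in> U <#> N. extended_crossed_hom g = x}"
proof (rule openin_subopen[THEN iffD2], intro ballI)
  have NS: "subgroup N G"
    using normal_imp_subgroup[OF N(1)] .
  fix g assume g: "g \<in> {g \<in> U <#> N. extended_crossed_hom g = x}"
  then obtain u n where u: "u \<in> U" "n \<in> N" "g = u \<otimes> n"
    by (auto simp: mem_set_mult_iff)
  have G: "u \<in> carrier G" "n \<in> carrier G"
    using u subgroup.mem_carrier[OF U] subgroup.mem_carrier[OF NS] by auto
  let ?Z = "{y \<in> carrier G. inv g \<otimes> y \<in> N}"
  have "?Z \<subseteq> {g \<in> U <#> N. extended_crossed_hom g = x}"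
  proof
    fix y assume y: "y \<in> ?Z"
    then have "y = u \<otimes> (n \<otimes> (inv g \<otimes> y))"
      using u(3) G by (simp add: m_assoc[symmetric])
    moreover have "n \<otimes> (inv g \<otimes> y) \<in> N"
      using y u(2) by (simp add: subgroup.m_closed[OF NS])
    ultimately have "y \<in> U <#> N" "extended_crossed_hom y = f u"
      using u(1) extended_crossed_hom_eq mem_set_mult_iff by metis+
    moreover have "extended_crossed_hom g = f u"
      using u extended_crossed_hom_eq by simp
    ultimately show "y \<in> {g \<in> U <#> N. extended_crossed_hom g = x}"
      using g by simp
  qed
  moreover have "g \<in> ?Z"
    using u G by (simp add: subgroup.one_closed[OF NS])
  moreover have "openin T ?Z"
    using openin_left_mult_preimage[OF _ N(2)] u G by simp
  ultimately show "\<exists>Z. openin T Z \<and> g \<in> Z \<and> Z \<subseteq> {g \<in> U <#> N. extended_crossed_hom g = x}"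
    by blast
qed

lemma continuous_crossed_hom_extended:
  "continuous_crossed_hom G T M act (U <#> N) extended_crossed_hom"
proof -
  have "\<forall>g \<in> U <#> N. extended_crossed_hom g \<in> carrier M"
    using extended_crossed_hom_eq crossed_hom_closed by (auto simp: mem_set_mult_iff)
  moreover have "openin (subtopology T (U <#> N)) {g \<in> U <#> N. extended_crossed_hom g = x}" for x
    using openin_extended_crossed_hom_fibre
      openin_open_subtopology[OF open_subgroup_set_mult_normal(2)[OF U N]] by blast
  ultimately show ?thesis
    by (simp add: continuous_crossed_hom_def extended_crossed_hom_mult)
qed

end

end

lemma H1_vanishes_subgroup:
  assumes h90: "\<forall>V. subgroup V G \<and> openin T V \<longrightarrow> H1_vanishes G T M act V"
    and U: "subgroup U G"
  shows "H1_vanishes G T M act U"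
  unfolding H1_vanishes_iff
proof (intro allI impI)
  fix f assume f: "continuous_crossed_hom G T M act U f"
  obtain W where W: "openin T W" "\<one> \<in> W" "\<forall>g \<in> U \<inter> W. f g = \<one>\<^bsub>M\<^esub>"
    using crossed_hom_kernel_nhd_one[OF U f] by blast
  define W' where "W' = W \<inter> (\<Inter>x \<in> f ` U. {g \<in> carrier G. act g x = x})"
  have "openin T W'"
    unfolding W'_def using W(1) crossed_hom_finite_image[OF U f] crossed_hom_closed[OF U f]
    by (intro openin_Int_Inter) (auto intro: openin_stabilizer)
  moreover have "\<one> \<in> W'"
    using W(2) by (auto simp: W'_def act_one crossed_hom_closed[OF U f])
  ultimately obtain N where N: "N \<lhd> G" "openin T N" "N \<subseteq> W'"
    using open_normal_subgroup_nhd_one by blast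
  have kernel: "\<forall>n \<in> N \<inter> U. f n = \<one>\<^bsub>M\<^esub>" and stable: "\<forall>n \<in> N. \<forall>u \<in> U. act n (f u) = f u"
    using N(3) W(3) by (auto simp: W'_def)
  let ?F = "extended_crossed_hom U f N"
  have "H1_vanishes G T M act (U <#> N)"
    using h90 open_subgroup_set_mult_normal[OF U N(1,2)] by blast
  then obtain m where m: "m \<in> carrier M" "\<forall>g \<in> U <#> N. ?F g = act g m \<otimes>\<^bsub>M\<^esub> inv\<^bsub>M\<^esub> m"
    using continuous_crossed_hom_extended[OF U f N(1,2) kernel stable] by (auto simp: H1_vanishes_iff)
  have "U \<subseteq> U <#> N"
    using subgroup.one_closed[OF normal_imp_subgroup[OF N(1)]] subgroup.mem_carrier[OF U]
    by (force simp: mem_set_mult_iff)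
  then show "\<exists>m \<in> carrier M. \<forall>g \<in> U. f g = act g m \<otimes>\<^bsub>M\<^esub> inv\<^bsub>M\<^esub> m"
    using m extended_crossed_hom_restrict[OF U f N(1,2) kernel stable]
    by (intro bexI[OF _ m(1)]) (metis subsetD)
qed

end

lemma discrete_module_restrict:
  assumes "discrete_module G T M act" "H \<subseteq> carrier G"
  shows "discrete_module (G\<lparr>carrier := H\<rparr>) (subtopology T H) M act"
proof -
  have "{g \<in> H. act g x = x} = {g \<in> carrier G. act g x = x} \<inter> H" for x
    using assms(2) by auto
  then show ?thesis
    using assms by (auto simp: discrete_module_def openin_subtopology_Int subset_iff)
qed

lemma H1_vanishes_restrict:
  assumes "H1_vanishes G T M act U" "U \<subseteq> H"
  shows "H1_vanishes (G\<lparr>carrier := H\<rparr>) (subtopology T H) M act U"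
  using assms by (simp add: H1_vanishes_def subtopology_subtopology Int_absorb1)

theorem lemma2p5:
  fixes p :: nat and G :: "('g, 'b) monoid_scheme" and T :: "'g topology"
    and \<theta> :: "'g \<Rightarrow> nat \<Rightarrow> int"
    and M :: "('m, 'c) monoid_scheme" and act :: "'g \<Rightarrow> 'm \<Rightarrow> 'm"
    and H :: "'g set"
  assumes "p_oriented p G T \<theta>"
    and "hilbert90_module p G T \<theta> M act"
    and "subgroup H G" and "closedin T H"
  shows "hilbert90_module p (G\<lparr>carrier := H\<rparr>) (subtopology T H) \<theta> M act"
proof -
  interpret profinite_module G T M act
    using assms(1,2) by unfold_locales (simp_all add: p_oriented_def hilbert90_module_def)
  have HG: "H \<subseteq> carrier G"
    using subgroup.subset[OF assms(3)] .
  have "H1_vanishes (G\<lparr>carrier := H\<rparr>) (subtopology T H) M act U"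
    if "subgroup U (G\<lparr>carrier := H\<rparr>)" for U
  proof -
    have "H1_vanishes G T M act U"
      using H1_vanishes_subgroup incl_subgroup[OF assms(3) that] assms(2)
      by (simp add: hilbert90_module_def)
    then show ?thesis
      using H1_vanishes_restrict subgroup.subset[OF that] by simp
  qed
  moreover have "discrete_module (G\<lparr>carrier := H\<rparr>) (subtopology T H) M act"
    using discrete_module_restrict[OF discrete_module HG] .
  ultimately show ?thesis
    using assms(2) HG unfolding hilbert90_module_def by (simp add: subset_iff) blast
qed

end
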